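(* Let $\mathbf{b}=(b_n)_{n\in\mathbb{N}_0}$ be a $D$-sequence. Then $\frac{b_{n+1}}{b_n}\to\infty$ if and only if $b_j\to 0$ in $(\mathbb{Z},\tau_{\mathbf{b}})$.
   Context: $\mathbb{T}=\mathbb{R}/\mathbb{Z}$; $\mathbb{T}_m=[-\frac{1}{4m},\frac{1}{4m}]+\mathbb{Z}$. A $D$-sequence is a sequence $\mathbf{b}=(b_n)_{n\in\mathbb{N}_0}$ of natural numbers with $b_0=1$, $b_n\mid b_{n+1}$, $b_n\neq b_{n+1}$. $\tau_{\mathbf{b}}$ is the group topology on $\mathbb{Z}$ with neighborhood basis at $0$ given by $V_{\mathbf{b},m}=\{k\in\mathbb{Z}: \frac{k}{b_n}+\mathbb{Z}\in\mathbb{T}_m \text{ for all } n\in\mathbb{N}\}$, $m\in\mathbb{N}$. *)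

theory Defs
  imports "HOL-Analysis.Analysis"
begin

definition D_sequence :: "(nat \<Rightarrow> nat) \<Rightarrow> bool" where
  "D_sequence b \<longleftrightarrow> b 0 = 1 \<and> (\<forall>n. b n > 0) \<and> (\<forall>n. b n dvd b (Suc n) \<and> b n \<noteq> b (Suc n))"

text \<open>Membership of x + Z in T_m = [-1/(4m), 1/(4m)] + Z.\<close>
definition in_T :: "nat \<Rightarrow> real \<Rightarrow> bool" where
  "in_T m x \<longleftrightarrow> (\<exists>z::int. \<bar>x - real_of_int z\<bar> \<le> 1 / (4 * real m))"

definition V_b :: "(nat \<Rightarrow> nat) \<Rightarrow> nat \<Rightarrow> int set" where
  "V_b b m = {k::int. \<forall>n\<ge>1. in_T m (real_of_int k / real (b n))}"

definition tau_b :: "(nat \<Rightarrow> nat) \<Rightarrow> int topology" where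
  "tau_b b = topology (\<lambda>U. \<forall>x\<in>U. \<exists>m\<ge>1. (\<lambda>k. x + k) ` V_b b m \<subseteq> U)"

end

theory Submission
  imports Defs
begin

(* The sets V_b b m form a neighbourhood basis at 0 of tau_b b: they
   contain 0, shrink as m grows, and V_b b (2m) + V_b b (2m) \<subseteq> V_b b m.  Hence
   convergence to 0 in tau_b b means "eventually in every V_b b m".
   For a D-sequence, b_j/b_n is an integer for n \<le> j, and lies in [0, b_j/b_(j+1)]
   with b_j/b_(j+1) \<le> 1/2 for n > j.  So b_j \<in> V_b b m exactly when the single
   number b_j/b_(j+1) lies within 1/(4m) of 0, i.e. when b_(j+1)/b_j \<ge> 4m.
   Consequently b_j \<rightarrow> 0 iff for every m the quotients eventually exceed 4m,
   which is divergence of the quotients to infinity. *)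

lemma in_T_antimono:
  assumes "1 \<le> m" "m \<le> m'" "in_T m' x"
  shows "in_T m x"
proof -
  obtain z :: int where z: "\<bar>x - z\<bar> \<le> 1 / (4 * real m')"
    using assms(3) by (auto simp: in_T_def)
  have "1 / (4 * real m') \<le> 1 / (4 * real m)"
    using assms(1,2) by (simp add: frac_le)
  with z show ?thesis unfolding in_T_def by (blast intro: order_trans)
qed

lemma in_T_add:
  assumes "in_T (2 * m) x" "in_T (2 * m) y"
  shows "in_T m (x + y)"
proof -
  obtain z1 z2 :: int where z: "\<bar>x - z1\<bar> \<le> 1 / (8 * real m)" "\<bar>y - z2\<bar> \<le> 1 / (8 * real m)"
    using assms by (auto simp: in_T_def)
  have "\<bar>(x + y) - real_of_int (z1 + z2)\<bar> \<le> \<bar>x - z1\<bar> + \<bar>y - z2\<bar>" by simp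
  also have "\<dots> \<le> 1 / (4 * real m)" using z by simp
  finally show ?thesis unfolding in_T_def by blast
qed

text \<open>On [0, 1/2] the nearest integer is 0, so membership in T_m is a plain bound.\<close>
lemma in_T_small_iff:
  assumes "0 \<le> x" "x \<le> 1 / 2"
  shows "in_T m x \<longleftrightarrow> x \<le> 1 / (4 * real m)"
proof
  assume "in_T m x"
  then obtain z :: int where z: "\<bar>x - z\<bar> \<le> 1 / (4 * real m)" by (auto simp: in_T_def)
  have "x \<le> \<bar>x - z\<bar>"
  proof (cases "z \<le> 0")
    case True
    then show ?thesis using assms(1) by linarith
  next
    case False
    then have "real_of_int z \<ge> 1" by simp
    then show ?thesis using assms(2) by linarith
  qed
  with z show "x \<le> 1 / (4 * real m)" by linarith
next
  assume "x \<le> 1 / (4 * real m)"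
  then show "in_T m x" using assms(1) unfolding in_T_def by (intro exI[of _ 0]) simp
qed

lemma in_T_of_int: "in_T m (real_of_int z)"
  unfolding in_T_def by (intro exI[of _ z]) simp

lemma V_b_zero: "0 \<in> V_b b m"
  unfolding V_b_def using in_T_of_int[of m 0] by simp

lemma V_b_antimono: "1 \<le> m \<Longrightarrow> m \<le> m' \<Longrightarrow> V_b b m' \<subseteq> V_b b m"
  unfolding V_b_def using in_T_antimono by blast

lemma V_b_add: "u \<in> V_b b (2 * m) \<Longrightarrow> v \<in> V_b b (2 * m) \<Longrightarrow> u + v \<in> V_b b m"
  unfolding V_b_def by (auto simp: add_divide_distrib intro: in_T_add)

text \<open>The defining predicate of tau_b b is a topology: closure under finite
  intersections uses that the V_b b m are nested.\<close>
lemma istopology_tau_b: "istopology (\<lambda>U. \<forall>x\<in>U. \<exists>m\<ge>1. (\<lambda>k. x + k) ` V_b b m \<subseteq> U)"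
  unfolding istopology_def
proof (intro conjI allI impI ballI)
  fix S T x
  assume S: "\<forall>x\<in>S. \<exists>m\<ge>1. (+) x ` V_b b m \<subseteq> S"
    and T: "\<forall>x\<in>T. \<exists>m\<ge>1. (+) x ` V_b b m \<subseteq> T" and x: "x \<in> S \<inter> T"
  then obtain m1 m2 where m: "m1 \<ge> 1" "(+) x ` V_b b m1 \<subseteq> S" "m2 \<ge> 1" "(+) x ` V_b b m2 \<subseteq> T"
    by blast
  have "V_b b (max m1 m2) \<subseteq> V_b b m1" "V_b b (max m1 m2) \<subseteq> V_b b m2"
    using m V_b_antimono[of _ "max m1 m2"] by auto
  then have "(+) x ` V_b b (max m1 m2) \<subseteq> S \<inter> T" using m by blast
  moreover have "1 \<le> max m1 m2" using m by simp
  ultimately show "\<exists>m\<ge>1. (+) x ` V_b b m \<subseteq> S \<inter> T" by blast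
next
  fix K x
  assume "\<forall>S\<in>K. \<forall>x\<in>S. \<exists>m\<ge>1. (+) x ` V_b b m \<subseteq> S" and "x \<in> \<Union>K"
  then show "\<exists>m\<ge>1. (+) x ` V_b b m \<subseteq> \<Union>K" by (meson Union_iff Union_upper order_trans)
qed

lemma openin_tau_b:
  "openin (tau_b b) U \<longleftrightarrow> (\<forall>x\<in>U. \<exists>m\<ge>1. (\<lambda>k. x + k) ` V_b b m \<subseteq> U)"
  unfolding tau_b_def topology_inverse'[OF istopology_tau_b] by (rule refl)

lemma topspace_tau_b: "topspace (tau_b b) = UNIV"
proof -
  have "openin (tau_b b) UNIV" unfolding openin_tau_b by auto
  then show ?thesis by (simp add: openin_subset subset_antisym)
qed

text \<open>Openness is where V_b b (2m) + V_b b (2m) \<subseteq> V_b b m is needed.\<close>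
lemma V_b_neighbourhood:
  assumes "m \<ge> 1"
  shows "\<exists>U. openin (tau_b b) U \<and> 0 \<in> U \<and> U \<subseteq> V_b b m"
proof -
  define U where "U = {x. \<exists>m'\<ge>1. (+) x ` V_b b m' \<subseteq> V_b b m}"
  have "openin (tau_b b) U" unfolding openin_tau_b
  proof
    fix x assume "x \<in> U"
    then obtain m' where m': "m' \<ge> 1" "(+) x ` V_b b m' \<subseteq> V_b b m" unfolding U_def by blast
    have "(+) y ` V_b b (2 * m') \<subseteq> V_b b m" if y: "y \<in> (+) x ` V_b b (2 * m')" for y
    proof -
      obtain v where v: "v \<in> V_b b (2 * m')" "y = x + v" using y by blast
      have "x + (v + u) \<in> V_b b m" if "u \<in> V_b b (2 * m')" for u
        using m'(2) V_b_add[OF v(1) that] by blast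
      then show ?thesis using v(2) by (auto simp: add.assoc)
    qed
    then have "(+) x ` V_b b (2 * m') \<subseteq> U" using m'(1) unfolding U_def
      by (auto intro!: exI[of _ "2 * m'"])
    then show "\<exists>m\<ge>1. (+) x ` V_b b m \<subseteq> U" using m'(1) by (intro exI[of _ "2 * m'"]) simp
  qed
  moreover have "0 \<in> U" unfolding U_def using assms by auto
  moreover have "U \<subseteq> V_b b m"
    unfolding U_def using V_b_zero by fastforce
  ultimately show ?thesis by blast
qed

lemma limitin_tau_b_zero:
  "limitin (tau_b b) f 0 F \<longleftrightarrow> (\<forall>m\<ge>1. eventually (\<lambda>j. f j \<in> V_b b m) F)"
proof
  assume lim: "limitin (tau_b b) f 0 F"
  show "\<forall>m\<ge>1. eventually (\<lambda>j. f j \<in> V_b b m) F"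
  proof (intro allI impI)
    fix m :: nat assume "m \<ge> 1"
    then obtain U where U: "openin (tau_b b) U" "0 \<in> U" "U \<subseteq> V_b b m"
      using V_b_neighbourhood by blast
    then have "eventually (\<lambda>j. f j \<in> U) F" using lim unfolding limitin_def by blast
    then show "eventually (\<lambda>j. f j \<in> V_b b m) F" using U(3) by (auto elim: eventually_mono)
  qed
next
  assume ev: "\<forall>m\<ge>1. eventually (\<lambda>j. f j \<in> V_b b m) F"
  show "limitin (tau_b b) f 0 F" unfolding limitin_def topspace_tau_b
  proof (intro conjI UNIV_I allI impI)
    fix U assume "openin (tau_b b) U \<and> 0 \<in> U"
    then obtain m where "m \<ge> 1" "V_b b m \<subseteq> U" unfolding openin_tau_b by fastforce
    moreover have "eventually (\<lambda>j. f j \<in> V_b b m) F" using ev \<open>m \<ge> 1\<close> by blast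
    ultimately show "eventually (\<lambda>j. f j \<in> U) F" by (auto elim: eventually_mono)
  qed
qed

lemma D_sequence_pos: "D_sequence b \<Longrightarrow> b n > 0"
  unfolding D_sequence_def by blast

lemma D_sequence_dvd:
  assumes "D_sequence b" "j \<le> n"
  shows "b j dvd b n"
  using assms(2) by (rule transitive_stepwise_le)
    (use assms(1) in \<open>auto simp: D_sequence_def intro: dvd_trans\<close>)

lemma D_sequence_double:
  assumes "D_sequence b"
  shows "2 * b j \<le> b (Suc j)"
proof -
  obtain k where k: "b (Suc j) = b j * k" using assms unfolding D_sequence_def by blast
  have "k \<noteq> 1" using assms k unfolding D_sequence_def by (metis mult.right_neutral)
  moreover have "k \<noteq> 0" using k D_sequence_pos[OF assms, of "Suc j"] by auto
  ultimately show ?thesis using k by (simp add: mult.commute)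
qed

lemma D_sequence_inverse_quotient_bounds:
  assumes "D_sequence b"
  shows "0 < real (b j) / real (b (Suc j))" "real (b j) / real (b (Suc j)) \<le> 1 / 2"
  using D_sequence_double[OF assms, of j] D_sequence_pos[OF assms]
  by (simp_all add: field_simps flip: of_nat_mult)

text \<open>Membership of b_j in V_b b m depends only on the next quotient: for n \<le> j the
  number b_j/b_n is an integer, and for n > j it lies between 0 and b_j/b_(j+1) \<le> 1/2,
  where membership in T_m is monotone.\<close>
lemma D_sequence_in_V_b_iff:
  assumes D: "D_sequence b"
  shows "int (b j) \<in> V_b b m \<longleftrightarrow> in_T m (real (b j) / real (b (Suc j)))"
proof
  assume "int (b j) \<in> V_b b m"
  then show "in_T m (real (b j) / real (b (Suc j)))" unfolding V_b_def by auto
next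
  note pos = D_sequence_pos[OF D]
  define x where "x = real (b j) / real (b (Suc j))"
  have x2: "x \<le> 1 / 2" unfolding x_def by (rule D_sequence_inverse_quotient_bounds[OF D])
  assume "in_T m x"
  then have x_small: "x \<le> 1 / (4 * real m)" using in_T_small_iff x2 unfolding x_def by simp
  have "in_T m (real (b j) / real (b n))" for n
  proof (cases "n \<le> j")
    case True
    then obtain k where "b j = b n * k" using D_sequence_dvd[OF D] by blast
    then have "real (b j) / real (b n) = real_of_int (int k)" using pos[of n] by simp
    then show ?thesis using in_T_of_int by metis
  next
    case False
    then have "b (Suc j) \<le> b n"
      using D_sequence_dvd[OF D, of "Suc j" n] pos[of n] by (simp add: dvd_imp_le)
    then have "real (b j) / real (b n) \<le> x" unfolding x_def using pos by (simp add: frac_le)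
    then have "real (b j) / real (b n) \<le> 1 / (4 * real m)"
      and "real (b j) / real (b n) \<le> 1 / 2" using x_small x2 by linarith+
    then show ?thesis by (simp add: in_T_small_iff)
  qed
  then show "int (b j) \<in> V_b b m" unfolding V_b_def by simp
qed

lemma D_sequence_in_V_b_iff_quotient:
  assumes D: "D_sequence b" and m: "m \<ge> 1"
  shows "int (b j) \<in> V_b b m \<longleftrightarrow> 4 * real m \<le> real (b (Suc j)) / real (b j)"
proof -
  have "in_T m (real (b j) / real (b (Suc j)))
        \<longleftrightarrow> real (b j) / real (b (Suc j)) \<le> 1 / (4 * real m)"
    using D_sequence_inverse_quotient_bounds[OF D] by (intro in_T_small_iff) auto
  also have "\<dots> \<longleftrightarrow> 4 * real m \<le> real (b (Suc j)) / real (b j)"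
    using D_sequence_pos[OF D, of j] D_sequence_pos[OF D, of "Suc j"] m
    by (simp add: field_simps)
  finally show ?thesis using D_sequence_in_V_b_iff[OF D] by simp
qed

lemma filterlim_at_top_iff_multiples:
  "filterlim f at_top F \<longleftrightarrow> (\<forall>m::nat\<ge>1. eventually (\<lambda>x. 4 * real m \<le> f x) F)"
proof
  assume "filterlim f at_top F"
  then show "\<forall>m::nat\<ge>1. eventually (\<lambda>x. 4 * real m \<le> f x) F"
    unfolding filterlim_at_top by blast
next
  assume ev: "\<forall>m::nat\<ge>1. eventually (\<lambda>x. 4 * real m \<le> f x) F"
  show "filterlim f at_top F" unfolding filterlim_at_top
  proof
    fix Z :: real
    define m where "m = nat \<lceil>Z\<rceil> + 1"
    have "m \<ge> 1" unfolding m_def by simp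
    then have "eventually (\<lambda>x. 4 * real m \<le> f x) F" using ev by blast
    moreover have "Z \<le> 4 * real m" unfolding m_def using real_nat_ceiling_ge[of Z] by simp
    ultimately show "eventually (\<lambda>x. Z \<le> f x) F" by (auto elim: eventually_mono)
  qed
qed

theorem corollary3p6:
  fixes b :: "nat \<Rightarrow> nat"
  assumes "D_sequence b"
  shows "filterlim (\<lambda>n. real (b (Suc n)) / real (b n)) at_top sequentially
         \<longleftrightarrow> limitin (tau_b b) (\<lambda>j. int (b j)) 0 sequentially"
  unfolding filterlim_at_top_iff_multiples limitin_tau_b_zero
  using D_sequence_in_V_b_iff_quotient[OF assms] by simp

end
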